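(* Let $D$ be a domain in $\mathbb{C}^n$, let $\mathcal{F}$ be a family of holomorphic functions on $D$, and let $\alpha>0$ be a real number. If the family of functions $$F_\alpha=\left\{z\mapsto \sup_{\|v\|=1}\frac{|(Df(z),v)|}{1+|f(z)|^{\alpha}}\ :\ f\in\mathcal{F}\right\}$$ is locally uniformly bounded in $D$, then $\mathcal{F}$ is normal in $D$.
   Context: For $v=(v_1,\dots,v_n)\in\mathbb{C}^n$, $(Df(z),v)=\sum_{j=1}^n \frac{\partial f}{\partial z_j}(z)\,v_j$; the supremum is over $v$ with Euclidean norm $1$. A family is normal in $D$ if every sequence in it has a subsequence converging locally uniformly in $D$. *)

theory Defs
  imports "HOL-Analysis.Analysis"
begin

definition clinear_map :: "(complex ^ 'n \<Rightarrow> complex) \<Rightarrow> bool" where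
  "clinear_map L \<longleftrightarrow> linear L \<and> (\<forall>c v. L (c *s v) = c * L v)"

definition holo_on :: "(complex ^ 'n \<Rightarrow> complex) \<Rightarrow> (complex ^ 'n) set \<Rightarrow> bool" where
  "holo_on f D \<longleftrightarrow> (\<forall>z\<in>D. \<exists>L. clinear_map L \<and> (f has_derivative L) (at z))"

definition cpartial :: "(complex ^ 'n \<Rightarrow> complex) \<Rightarrow> 'n \<Rightarrow> complex ^ 'n \<Rightarrow> complex" where
  "cpartial f j z = deriv (\<lambda>w. f (\<chi> k. if k = j then z $ k + w else z $ k)) 0"

definition Dpair :: "(complex ^ 'n \<Rightarrow> complex) \<Rightarrow> complex ^ 'n \<Rightarrow> complex ^ 'n \<Rightarrow> complex" where
  "Dpair f z v = (\<Sum>j\<in>UNIV. cpartial f j z * v $ j)"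

definition F_alpha :: "real \<Rightarrow> (complex ^ 'n \<Rightarrow> complex) \<Rightarrow> complex ^ 'n \<Rightarrow> real" where
  "F_alpha \<alpha> f z = (SUP v\<in>{v. norm v = 1}. cmod (Dpair f z v) / (1 + cmod (f z) powr \<alpha>))"

definition loc_unif_bounded :: "('a \<Rightarrow> real) set \<Rightarrow> ('a::topological_space) set \<Rightarrow> bool" where
  "loc_unif_bounded G D \<longleftrightarrow>
     (\<forall>z\<in>D. \<exists>U M. open U \<and> z \<in> U \<and> U \<subseteq> D \<and> (\<forall>g\<in>G. \<forall>w\<in>U. \<bar>g w\<bar> \<le> M))"

definition normal_family :: "(complex ^ 'n \<Rightarrow> complex) set \<Rightarrow> (complex ^ 'n) set \<Rightarrow> bool" where
  "normal_family F D \<longleftrightarrow>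
     (\<forall>s::nat \<Rightarrow> complex ^ 'n \<Rightarrow> complex. range s \<subseteq> F \<longrightarrow>
        (\<exists>r. strict_mono r \<and>
          ((\<exists>g. \<forall>z\<in>D. \<exists>U. open U \<and> z \<in> U \<and> U \<subseteq> D \<and>
                   uniform_limit U (\<lambda>k. s (r k)) g sequentially)
           \<or> (\<forall>z\<in>D. \<exists>U. open U \<and> z \<in> U \<and> U \<subseteq> D \<and>
                   (\<forall>B. \<forall>\<^sub>F k in sequentially. \<forall>w\<in>U. cmod (s (r k) w) \<ge> B)))))"

end

theory Submission
  imports Defs "HOL-Complex_Analysis.Great_Picard"
begin

text \<open>
  A bound \<open>F\<^sub>\<alpha> f \<le> M\<close> means \<open>\<parallel>Df(z)\<parallel> \<le> M (1 + \<bar>f z\<bar>\<^sup>\<alpha>)\<close>. Integrating along segments,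
  \<open>\<bar>f\<bar> \<le> A\<close> at one point forces \<open>\<bar>f\<bar> < A + 1\<close> on a ball whose radius depends only on
  \<open>A\<close> and \<open>M\<close>. Take a sequence in the family and a base point \<open>p\<close>.
  If \<open>f\<^sub>k(p) \<rightarrow> \<infinity>\<close>, the set of points where \<open>f\<^sub>k \<rightarrow> \<infinity>\<close> is open (on each complex line
  through such a point, Montel's and Hurwitz's theorems applied to \<open>1/f\<^sub>k\<close> spread the
  divergence) and so is its complement; by connectedness \<open>f\<^sub>k \<rightarrow> \<infinity>\<close> locally uniformly.
  Otherwise a subsequence is bounded at \<open>p\<close>, hence, by the first case applied to its
  subsequences, pointwise bounded everywhere; the derivative bound then makes it locally
  bounded and equicontinuous, and Arzela-Ascoli yields a locally uniformly convergent
  subsequence.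
\<close>

lemma subseq_choice:
  assumes "\<And>n N. \<exists>k\<ge>N. P n k"
  obtains r :: "nat \<Rightarrow> nat" where "strict_mono r" "\<And>n. P n (r n)"
proof -
  define r where "r = rec_nat (SOME k. P 0 k) (\<lambda>n m. SOME k. k \<ge> Suc m \<and> P (Suc n) k)"
  have P0: "P 0 (r 0)"
    unfolding r_def using assms[where n = 0 and N = 0] by (auto intro: someI_ex)
  have PSuc: "r (Suc n) \<ge> Suc (r n) \<and> P (Suc n) (r (Suc n))" for n
  proof -
    have "r (Suc n) = (SOME k. k \<ge> Suc (r n) \<and> P (Suc n) k)"
      by (simp add: r_def)
    then show ?thesis
      using someI_ex[OF assms[where n = "Suc n" and N = "Suc (r n)"]] by simp
  qed
  have "strict_mono r"
    unfolding strict_mono_Suc_iff using PSuc by (simp add: Suc_le_eq)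
  moreover have "P n (r n)" for n
    using P0 PSuc by (cases n) auto
  ultimately show thesis
    using that by blast
qed

lemma frequently_subseq:
  assumes "frequently P sequentially"
  obtains r :: "nat \<Rightarrow> nat" where "strict_mono r" "\<And>n. P (r n)"
  using assms infinite_enumerate[of "{k. P k}"]
  by (auto simp: frequently_cofinite cofinite_eq_sequentially[symmetric])

lemma bounded_subseq_or_tendsto_at_top:
  fixes x :: "nat \<Rightarrow> real"
  obtains (bounded) A r where "strict_mono (r :: nat \<Rightarrow> nat)" "\<And>n. x (r n) \<le> A"
    | (at_top) "filterlim x at_top sequentially"
proof (cases "filterlim x at_top sequentially")
  case False
  then obtain A where "\<not> (\<forall>\<^sub>F k in sequentially. A \<le> x k)"
    unfolding filterlim_at_top by blast
  then have "frequently (\<lambda>k. x k \<le> A) sequentially"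
    by (simp add: not_eventually not_le frequently_elim1 less_imp_le)
  then obtain r :: "nat \<Rightarrow> nat" where "strict_mono r" "\<And>n. x (r n) \<le> A"
    using frequently_subseq by metis
  then show thesis
    by (rule bounded)
qed (rule at_top)

lemma unbounded_subseq_tendsto_at_top:
  fixes x :: "nat \<Rightarrow> real"
  assumes "\<not> (\<exists>A. \<forall>k. x k \<le> A)"
  obtains r where "strict_mono r" "filterlim (\<lambda>n. x (r n)) at_top sequentially"
proof -
  have "\<exists>k\<ge>N. real n < x k" for n N
  proof (rule ccontr)
    assume "\<not> (\<exists>k\<ge>N. real n < x k)"
    then have "x k \<le> max (real n) (Max (x ` {..<N}))" for k
      by (cases "k < N") (auto simp: not_less intro: le_max_iff_disj[THEN iffD2])
    then show False
      using assms by blast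
  qed
  then obtain r where r: "strict_mono r" "\<And>n. real n < x (r n)"
    by (rule subseq_choice[where P = "\<lambda>n k. real n < x k"]) blast
  have "filterlim (\<lambda>n. x (r n)) at_top sequentially"
    by (rule filterlim_at_top_mono[OF filterlim_real_sequentially])
       (use r(2) in \<open>auto intro: always_eventually less_imp_le\<close>)
  with r(1) show thesis
    using that by blast
qed

lemma uniformly_Cauchy_on_subseq_tail:
  fixes f :: "nat \<Rightarrow> 'a \<Rightarrow> 'b::metric_space" and k1 k2 :: "nat \<Rightarrow> nat"
  assumes Cauchy: "uniformly_Cauchy_on X (f \<circ> k1)"
    and tail: "\<And>j. N \<le> j \<Longrightarrow> \<exists>j'\<ge>j. k2 j = k1 j'"
  shows "uniformly_Cauchy_on X (f \<circ> k2)"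
proof (rule uniformly_Cauchy_onI)
  fix e :: real
  assume "e > 0"
  then obtain M where M: "\<And>x m n. \<lbrakk>x \<in> X; m \<ge> M; n \<ge> M\<rbrakk> \<Longrightarrow> dist (f (k1 m) x) (f (k1 n) x) < e"
    using Cauchy unfolding uniformly_Cauchy_on_def by force
  have "dist (f (k2 m) x) (f (k2 n) x) < e" if "x \<in> X" "m \<ge> max M N" "n \<ge> max M N" for x m n
    using tail[of m] tail[of n] M[of x] that by fastforce
  then show "\<exists>M. \<forall>x\<in>X. \<forall>m\<ge>M. \<forall>n\<ge>M. dist ((f \<circ> k2) m x) ((f \<circ> k2) n x) < e"
    by (intro exI[of _ "max M N"]) simp
qed

lemma Arzela_Ascoli_uniformly_Cauchy:
  fixes \<F> :: "nat \<Rightarrow> 'a::euclidean_space \<Rightarrow> 'b::{real_normed_vector,heine_borel}"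
  assumes "compact S" and bounded: "\<And>n x. x \<in> S \<Longrightarrow> norm (\<F> n x) \<le> B"
    and equicont: "\<And>x e. \<lbrakk>x \<in> S; 0 < e\<rbrakk>
                     \<Longrightarrow> \<exists>d>0. \<forall>n y. y \<in> S \<and> norm (x - y) < d \<longrightarrow> norm (\<F> n x - \<F> n y) < e"
  shows "\<exists>k :: nat \<Rightarrow> nat. strict_mono k \<and> uniformly_Cauchy_on S (\<F> \<circ> k)"
proof -
  obtain g k where "continuous_on S g" "strict_mono (k :: nat \<Rightarrow> nat)"
    "\<And>e. 0 < e \<Longrightarrow> \<exists>N. \<forall>n x. n \<ge> N \<and> x \<in> S \<longrightarrow> norm (\<F> (k n) x - g x) < e"
  proof (rule Arzela_Ascoli [of S \<F> B])
    show "compact S"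
      by (rule \<open>compact S\<close>)
    show "\<And>n x. x \<in> S \<Longrightarrow> norm (\<F> n x) \<le> B"
      by (rule bounded)
    show "\<exists>d>0. \<forall>n y. y \<in> S \<and> norm (x - y) < d \<longrightarrow> norm (\<F> n x - \<F> n y) < e"
      if "x \<in> S" "0 < e" for x e
      using equicont that .
  qed blast
  then have "uniformly_convergent_on S (\<F> \<circ> k)"
    unfolding uniformly_convergent_on_def uniform_limit_sequentially_iff
    by (auto simp: dist_norm) blast
  then show ?thesis
    using \<open>strict_mono k\<close> uniformly_convergent_Cauchy by blast
qed

lemma Arzela_Ascoli_open:
  fixes \<F> :: "nat \<Rightarrow> 'a::euclidean_space \<Rightarrow> 'b::{real_normed_vector,heine_borel}"
  assumes "open S"
    and bounded: "\<And>K. \<lbrakk>compact K; K \<subseteq> S\<rbrakk> \<Longrightarrow> \<exists>B. \<forall>n. \<forall>x\<in>K. norm (\<F> n x) \<le> B"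
    and equicont: "\<And>x e. \<lbrakk>x \<in> S; 0 < e\<rbrakk>
                     \<Longrightarrow> \<exists>d>0. \<forall>n y. y \<in> S \<and> norm (x - y) < d \<longrightarrow> norm (\<F> n x - \<F> n y) < e"
  obtains g r where "strict_mono (r :: nat \<Rightarrow> nat)"
    "\<And>K. \<lbrakk>compact K; K \<subseteq> S\<rbrakk> \<Longrightarrow> uniform_limit K (\<F> \<circ> r) g sequentially"
proof -
  obtain K where comK: "\<And>n. compact (K n)" and KS: "\<And>n::nat. K n \<subseteq> S"
    and subK: "\<And>X. \<lbrakk>compact X; X \<subseteq> S\<rbrakk> \<Longrightarrow> \<exists>N. \<forall>n\<ge>N. X \<subseteq> K n"
    using open_Union_compact_subsets [OF \<open>open S\<close>] by metis
  obtain k :: "nat \<Rightarrow> nat" where "strict_mono k" and k: "\<And>i. uniformly_Cauchy_on (K i) (\<F> \<circ> k)"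
  proof (rule subsequence_diagonalization_lemma [where r = id and P = "\<lambda>i r. uniformly_Cauchy_on (K i) (\<F> \<circ> r)"])
    show "\<exists>k. strict_mono k \<and> uniformly_Cauchy_on (K i) (\<F> \<circ> (r \<circ> k))"
      for i and r :: "nat \<Rightarrow> nat"
    proof -
      obtain B where B: "\<And>n x. x \<in> K i \<Longrightarrow> norm ((\<F> \<circ> r) n x) \<le> B"
        using bounded[OF comK KS] by (metis comp_apply)
      have "\<exists>d>0. \<forall>n y. y \<in> K i \<and> norm (x - y) < d \<longrightarrow> norm ((\<F> \<circ> r) n x - (\<F> \<circ> r) n y) < e"
        if "x \<in> K i" "0 < e" for x e
        using equicont[of x e] that KS by (auto simp: subset_iff)
      from Arzela_Ascoli_uniformly_Cauchy[OF comK B this] show ?thesis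
        by (simp add: comp_def)
    qed
    show "uniformly_Cauchy_on (K i) (\<F> \<circ> (r \<circ> k2))"
      if "uniformly_Cauchy_on (K i) (\<F> \<circ> (r \<circ> k1))" "\<And>j. N \<le> j \<Longrightarrow> \<exists>j'\<ge>j. k2 j = k1 j'"
      for i and r k1 k2 :: "nat \<Rightarrow> nat" and N
      using that unfolding o_assoc by (rule uniformly_Cauchy_on_subseq_tail)
  qed simp
  show thesis
  proof
    show "uniform_limit X (\<F> \<circ> k) (\<lambda>x. lim (\<lambda>n. (\<F> \<circ> k) n x)) sequentially"
      if X: "compact X" "X \<subseteq> S" for X
    proof -
      obtain N where "X \<subseteq> K N"
        using subK[OF X] by blast
      then have "uniformly_Cauchy_on X (\<F> \<circ> k)"
        using k[of N] unfolding uniformly_Cauchy_on_def by blast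
      then show ?thesis
        using Cauchy_uniformly_convergent uniformly_convergent_uniform_limit_iff by blast
    qed
  qed (rule \<open>strict_mono k\<close>)
qed

lemma norm_vector_smult: "norm (c *s (x :: complex ^ 'n)) = cmod c * norm x"
proof -
  have "norm (c *s x) = L2_set (\<lambda>i. cmod c * norm (x $ i)) UNIV"
    by (simp add: norm_vec_def norm_mult)
  also have "\<dots> = cmod c * norm x"
    by (simp add: norm_vec_def L2_set_right_distrib)
  finally show ?thesis .
qed

lemma add_smult_diff_mem_ball:
  fixes p w :: "complex ^ 'n"
  assumes "cmod l < c" "w \<in> ball p r"
  shows "p + l *s (w - p) \<in> ball p (c * r)"
proof -
  have "norm (l *s (w - p)) = cmod l * norm (w - p)"
    by (rule norm_vector_smult)
  also have "\<dots> < c * r"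
    using assms by (intro mult_strict_mono') (auto simp: dist_norm norm_minus_commute)
  finally show ?thesis
    by (simp add: dist_norm norm_minus_commute)
qed

lemma bounded_linear_vector_smult_left: "bounded_linear (\<lambda>w::complex. w *s (a :: complex ^ 'n))"
proof (rule bounded_linear_intro[where K = "norm a"])
  show "(x + y) *s a = x *s a + y *s a" for x y
    by (simp add: vector_sadd_rdistrib)
  show "(r *\<^sub>R x) *s a = r *\<^sub>R (x *s a)" for r x
    by (simp add: vec_eq_iff)
  show "norm (x *s a) \<le> norm x * norm a" for x
    by (simp add: norm_vector_smult)
qed

lemma has_field_derivative_along_line:
  fixes f :: "complex ^ 'n \<Rightarrow> complex"
  assumes "(f has_derivative L) (at (z + w *s a))" "clinear_map L"
  shows "((\<lambda>w. f (z + w *s a)) has_field_derivative L a) (at w)"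
proof -
  have "((\<lambda>w. z + w *s a) has_derivative (\<lambda>w. w *s a)) (at w)"
    using bounded_linear_imp_has_derivative[OF bounded_linear_vector_smult_left]
    by (auto intro!: derivative_eq_intros)
  from diff_chain_at[OF this assms(1)]
  have "((\<lambda>w. f (z + w *s a)) has_derivative (L \<circ> (\<lambda>w. w *s a))) (at w)"
    by (simp add: o_def)
  moreover have "L \<circ> (\<lambda>w. w *s a) = (*) (L a)"
    using assms(2) by (auto simp: clinear_map_def fun_eq_iff mult.commute)
  ultimately show ?thesis
    by (simp add: has_field_derivative_def)
qed

lemma cpartial_eq_derivative_axis:
  fixes f :: "complex ^ 'n \<Rightarrow> complex"
  assumes "(f has_derivative L) (at z)" "clinear_map L"
  shows "cpartial f j z = L (axis j 1)"
proof -
  have line: "(\<lambda>w. f (\<chi> k. if k = j then z $ k + w else z $ k)) = (\<lambda>w. f (z + w *s axis j 1))"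
    by (auto simp: fun_eq_iff vec_eq_iff axis_def intro!: arg_cong[where f = f])
  have "((\<lambda>w. f (z + w *s axis j 1)) has_field_derivative L (axis j 1)) (at 0)"
    by (rule has_field_derivative_along_line) (use assms in simp_all)
  then show ?thesis
    unfolding cpartial_def line by (rule DERIV_imp_deriv)
qed

lemma Dpair_eq_derivative:
  fixes f :: "complex ^ 'n \<Rightarrow> complex"
  assumes "(f has_derivative L) (at z)" "clinear_map L"
  shows "Dpair f z v = L v"
proof -
  have lin: "linear L"
    using assms(2) by (simp add: clinear_map_def)
  have "Dpair f z v = (\<Sum>j\<in>UNIV. L (v $ j *s axis j 1))"
    unfolding Dpair_def using assms
    by (intro sum.cong refl) (auto simp: cpartial_eq_derivative_axis clinear_map_def mult.commute)
  also have "\<dots> = L (\<Sum>j\<in>UNIV. v $ j *s axis j 1)"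
    by (simp add: linear_sum[OF lin])
  also have "\<dots> = L v"
    by (simp add: basis_expansion)
  finally show ?thesis .
qed

lemma norm_derivative_le_F_alpha:
  fixes f :: "complex ^ 'n \<Rightarrow> complex"
  assumes "(f has_derivative L) (at z)" "clinear_map L" "F_alpha \<alpha> f z \<le> M"
  shows "norm (L v) \<le> M * (1 + norm (f z) powr \<alpha>) * norm v"
proof -
  have lin: "linear L"
    using assms(2) by (simp add: clinear_map_def)
  then obtain K where K: "\<And>x. norm (L x) \<le> norm x * K" "K > 0"
    using bounded_linear.pos_bounded linear_conv_bounded_linear by blast
  define d where "d = 1 + norm (f z) powr \<alpha>"
  have "d \<ge> 1"
    by (simp add: d_def)
  have unit: "norm (L u) \<le> M * d" if "norm u = 1" for u
  proof -
    have "cmod (Dpair f z v) / d \<le> K" if "norm v = 1" for v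
    proof -
      have "cmod (Dpair f z v) \<le> K * d"
        using K(1)[of v] K(2) \<open>d \<ge> 1\<close> that
        by (simp add: Dpair_eq_derivative[OF assms(1,2)]) (smt (verit) mult_le_cancel_left1)
      with \<open>d \<ge> 1\<close> show ?thesis
        by (simp add: divide_le_eq)
    qed
    then have bdd: "bdd_above ((\<lambda>v. cmod (Dpair f z v) / d) ` {v. norm v = 1})"
      by (intro bdd_aboveI2[where M = K]) auto
    have "cmod (Dpair f z u) / d \<le> F_alpha \<alpha> f z"
      unfolding F_alpha_def d_def[symmetric] by (rule cSUP_upper[OF _ bdd]) (use that in simp)
    then have "norm (L u) \<le> d * F_alpha \<alpha> f z"
      using \<open>d \<ge> 1\<close> by (simp add: Dpair_eq_derivative[OF assms(1,2)] divide_le_eq mult.commute)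
    also have "\<dots> \<le> d * M"
      using assms(3) \<open>d \<ge> 1\<close> by (simp add: mult_left_mono)
    finally show ?thesis
      by (simp add: mult.commute)
  qed
  have "L v = norm v *\<^sub>R L (v /\<^sub>R norm v)"
    by (cases "v = 0") (simp_all add: linear_0[OF lin] linear_cmul[OF lin, symmetric])
  also have "norm \<dots> \<le> norm v * (M * d)"
    by (cases "v = 0") (simp_all add: unit mult_left_mono)
  finally show ?thesis
    by (simp add: d_def mult_ac)
qed

definition deriv_growth_bound :: "real \<Rightarrow> real \<Rightarrow> (complex ^ 'n \<Rightarrow> complex) \<Rightarrow> (complex ^ 'n) set \<Rightarrow> bool"
  where "deriv_growth_bound \<alpha> M f C \<longleftrightarrow>
    (\<forall>w\<in>C. \<exists>L. (f has_derivative L) (at w) \<and> clinear_map L \<and>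
       (\<forall>v. norm (L v) \<le> M * (1 + norm (f w) powr \<alpha>) * norm v))"

definition locally_deriv_growth_bounded ::
    "real \<Rightarrow> (complex ^ 'n \<Rightarrow> complex) set \<Rightarrow> (complex ^ 'n) set \<Rightarrow> bool"
  where "locally_deriv_growth_bounded \<alpha> T D \<longleftrightarrow>
    (\<forall>z\<in>D. \<exists>R>0. \<exists>M>0. ball z R \<subseteq> D \<and> (\<forall>f\<in>T. deriv_growth_bound \<alpha> M f (ball z R)))"

lemma locally_deriv_growth_bounded_subset:
  "locally_deriv_growth_bounded \<alpha> T D \<Longrightarrow> T' \<subseteq> T \<Longrightarrow> locally_deriv_growth_bounded \<alpha> T' D"
  unfolding locally_deriv_growth_bounded_def by (meson subsetD)

lemma locally_deriv_growth_bounded_has_derivative: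
  assumes "locally_deriv_growth_bounded \<alpha> T D" "f \<in> T" "w \<in> D"
  obtains L where "clinear_map L" "(f has_derivative L) (at w)"
  using assms unfolding locally_deriv_growth_bounded_def deriv_growth_bound_def
  by (metis centre_in_ball)

lemma locally_deriv_growth_bounded_if_F_alpha_bounded:
  assumes "\<forall>f\<in>\<F>. holo_on f D" and "loc_unif_bounded ((\<lambda>f. F_alpha \<alpha> f) ` \<F>) D"
  shows "locally_deriv_growth_bounded \<alpha> \<F> D"
  unfolding locally_deriv_growth_bounded_def
proof
  fix z assume "z \<in> D"
  then obtain U M where U: "open U" "z \<in> U" "U \<subseteq> D"
    and M: "\<And>f w. f \<in> \<F> \<Longrightarrow> w \<in> U \<Longrightarrow> F_alpha \<alpha> f w \<le> M"
    using assms(2) unfolding loc_unif_bounded_def by (metis abs_le_D1 image_eqI)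
  obtain R where "R > 0" "ball z R \<subseteq> U"
    using U(1,2) openE by blast
  have "deriv_growth_bound \<alpha> (max M 1) f (ball z R)" if "f \<in> \<F>" for f
    unfolding deriv_growth_bound_def
  proof
    fix w assume "w \<in> ball z R"
    then have "w \<in> U"
      using \<open>ball z R \<subseteq> U\<close> by blast
    then obtain L where L: "clinear_map L" "(f has_derivative L) (at w)"
      using assms(1) \<open>f \<in> \<F>\<close> \<open>U \<subseteq> D\<close> unfolding holo_on_def by blast
    have "F_alpha \<alpha> f w \<le> max M 1"
      using M[OF \<open>f \<in> \<F>\<close> \<open>w \<in> U\<close>] by linarith
    with L show "\<exists>L. (f has_derivative L) (at w) \<and> clinear_map L \<and>
        (\<forall>v. norm (L v) \<le> max M 1 * (1 + norm (f w) powr \<alpha>) * norm v)"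
      using norm_derivative_le_F_alpha by blast
  qed
  then show "\<exists>R>0. \<exists>M>0. ball z R \<subseteq> D \<and> (\<forall>f\<in>\<F>. deriv_growth_bound \<alpha> M f (ball z R))"
    using \<open>R > 0\<close> \<open>ball z R \<subseteq> U\<close> \<open>U \<subseteq> D\<close>
    by (intro exI[of _ R] conjI exI[of _ "max M 1"]) auto
qed

lemma continuous_on_first_reach:
  fixes h :: "real \<Rightarrow> real"
  assumes "continuous_on {a..b} h" "a \<le> b" "h a < c" "c \<le> h b"
  obtains t where "a < t" "t \<le> b" "c \<le> h t" "\<And>s. a \<le> s \<Longrightarrow> s < t \<Longrightarrow> h s < c"
proof -
  define T where "T = {a..b} \<inter> h -` {c..}"
  have "closed T"
    unfolding T_def using assms(1) by (rule continuous_closed_preimage) auto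
  moreover have "b \<in> T" "bdd_below T"
    using assms(2,4) by (auto simp: T_def bdd_below_def)
  ultimately have "Inf T \<in> T"
    by (intro closed_contains_Inf) auto
  moreover have "h s < c" if "a \<le> s" "s < Inf T" for s
    using cInf_lower[of s T] \<open>bdd_below T\<close> \<open>Inf T \<in> T\<close> that by (force simp: T_def)
  moreover have "Inf T \<noteq> a"
    using \<open>Inf T \<in> T\<close> assms(3) by (auto simp: T_def)
  ultimately show thesis
    using that[of "Inf T"] by (auto simp: T_def)
qed

lemma deriv_growth_bound_segment:
  fixes f :: "complex ^ 'n \<Rightarrow> complex"
  assumes "convex C" and bound: "deriv_growth_bound \<alpha> M f C" and "z \<in> C" "w \<in> C" "t \<in> {0..1}"
  obtains D where "((\<lambda>t. f (z + t *\<^sub>R (w - z))) has_vector_derivative D) (at t)"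
    and "norm D \<le> M * (1 + norm (f (z + t *\<^sub>R (w - z))) powr \<alpha>) * norm (w - z)"
proof -
  have "z + t *\<^sub>R (w - z) \<in> C"
    using convexD_alt[OF \<open>convex C\<close> \<open>z \<in> C\<close> \<open>w \<in> C\<close>, of t] \<open>t \<in> {0..1}\<close>
    by (simp add: algebra_simps)
  then obtain L where L: "(f has_derivative L) (at (z + t *\<^sub>R (w - z)))" "linear L"
    and L_le: "\<And>v. norm (L v) \<le> M * (1 + norm (f (z + t *\<^sub>R (w - z))) powr \<alpha>) * norm v"
    using bound unfolding deriv_growth_bound_def clinear_map_def by blast
  have "((\<lambda>t. z + t *\<^sub>R (w - z)) has_derivative (\<lambda>h. h *\<^sub>R (w - z))) (at t)"
    by (auto intro!: derivative_eq_intros)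
  from diff_chain_at[OF this L(1)]
  have "((\<lambda>t. f (z + t *\<^sub>R (w - z))) has_vector_derivative L (w - z)) (at t)"
    by (simp add: has_vector_derivative_def o_def linear_cmul[OF L(2)])
  then show thesis
    using L_le by (rule that)
qed

lemma deriv_growth_bound_norm_less:
  fixes f :: "complex ^ 'n \<Rightarrow> complex"
  assumes "convex C" and bound: "deriv_growth_bound \<alpha> M f C" and "M \<ge> 0" "\<alpha> \<ge> 0"
    and "z \<in> C" "w \<in> C" and fz: "norm (f z) \<le> A"
    and close: "norm (w - z) * (M * (1 + (A + 1) powr \<alpha>)) < 1"
  shows "norm (f w) < A + 1"
proof (rule ccontr)
  assume fw: "\<not> norm (f w) < A + 1"
  define g where "g t = f (z + t *\<^sub>R (w - z))" for t :: real
  have "\<forall>t\<in>{0..1}. \<exists>D. (g has_vector_derivative D) (at t) \<and>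
                        norm D \<le> M * (1 + norm (g t) powr \<alpha>) * norm (w - z)"
    unfolding g_def[abs_def]
    using deriv_growth_bound_segment[OF \<open>convex C\<close> bound \<open>z \<in> C\<close> \<open>w \<in> C\<close>] by blast
  then obtain g' where g': "\<And>t. t \<in> {0..1} \<Longrightarrow> (g has_vector_derivative g' t) (at t)"
    and g'_le: "\<And>t. t \<in> {0..1} \<Longrightarrow> norm (g' t) \<le> M * (1 + norm (g t) powr \<alpha>) * norm (w - z)"
    by metis
  have cont: "continuous_on {0..1} g"
    using g' by (meson continuous_at_imp_continuous_on has_vector_derivative_continuous)
  \<comment> \<open>Before the first time \<open>t1\<close> at which \<open>\<bar>g\<bar>\<close> reaches \<open>A + 1\<close>, the derivative of \<open>g\<close>
      is bounded by the constant in \<open>close\<close>; the mean value inequality on \<open>[0, t1]\<close> then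
      keeps \<open>\<bar>g t1\<bar>\<close> below \<open>A + 1\<close>.\<close>
  obtain t1 where "0 < t1" "t1 \<le> 1" and t1: "A + 1 \<le> norm (g t1)"
    and before: "\<And>s. 0 \<le> s \<Longrightarrow> s < t1 \<Longrightarrow> norm (g s) < A + 1"
  proof (rule continuous_on_first_reach[of 0 1 "\<lambda>t. norm (g t)" "A + 1"])
    show "continuous_on {0..1} (\<lambda>t. norm (g t))"
      using cont by (rule continuous_on_norm)
    show "norm (g 0) < A + 1" "A + 1 \<le> norm (g 1)"
      using fz fw by (simp_all add: g_def)
  qed auto
  obtain s where s: "0 < s" "s < t1" and mvt: "norm (g t1 - g 0) \<le> norm ((t1 - 0) *\<^sub>R g' s)"
    using mvt_general[OF \<open>0 < t1\<close>, of g "\<lambda>s h. h *\<^sub>R g' s"] continuous_on_subset[OF cont] g' \<open>t1 \<le> 1\<close>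
    by (force simp: has_vector_derivative_def)
  have "norm (g s) powr \<alpha> \<le> (A + 1) powr \<alpha>"
    using before[of s] s \<open>\<alpha> \<ge> 0\<close> by (intro powr_mono2) auto
  then have "M * (1 + norm (g s) powr \<alpha>) * norm (w - z) \<le> M * (1 + (A + 1) powr \<alpha>) * norm (w - z)"
    using \<open>M \<ge> 0\<close> by (intro mult_right_mono mult_left_mono) auto
  then have "norm (g' s) < 1"
    using g'_le[of s] s \<open>t1 \<le> 1\<close> close by (simp add: mult_ac)
  then have "norm (g t1 - g 0) < 1"
    using mvt \<open>0 < t1\<close> \<open>t1 \<le> 1\<close> mult_left_le_one_le[of "norm (g' s)" t1] by simp
  with fz t1 show False
    using norm_triangle_ineq2[of "g t1" "g 0"] by (simp add: g_def)
qed

lemma Montel_Hurwitz_tendsto_zero: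
  fixes g :: "nat \<Rightarrow> complex \<Rightarrow> complex"
  assumes S: "open S" "connected S" and "a \<in> S"
    and hol: "\<And>n. g n holomorphic_on S" and nonzero: "\<And>n z. z \<in> S \<Longrightarrow> g n z \<noteq> 0"
    and le1: "\<And>n z. z \<in> S \<Longrightarrow> norm (g n z) \<le> 1" and lim: "(\<lambda>n. g n a) \<longlonglongrightarrow> 0"
  shows "\<exists>r :: nat \<Rightarrow> nat. strict_mono r \<and> (\<forall>z\<in>S. (\<lambda>n. g (r n) z) \<longlonglongrightarrow> 0)"
proof -
  define H where "H = {h. h holomorphic_on S \<and> (\<forall>z\<in>S. norm (h z) \<le> 1)}"
  obtain G r where G: "G holomorphic_on S" "strict_mono (r :: nat \<Rightarrow> nat)"
    "\<And>x. x \<in> S \<Longrightarrow> (\<lambda>n. g (r n) x) \<longlonglongrightarrow> G x"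
    "\<And>K. \<lbrakk>compact K; K \<subseteq> S\<rbrakk> \<Longrightarrow> uniform_limit K (g \<circ> r) G sequentially"
  proof (rule Montel[of S H g])
    show "open S"
      by (rule \<open>open S\<close>)
    show "\<And>h. h \<in> H \<Longrightarrow> h holomorphic_on S"
      by (simp add: H_def)
    show "\<exists>B. \<forall>h\<in>H. \<forall>z\<in>K. norm (h z) \<le> B" if "K \<subseteq> S" for K
      using that by (auto simp: H_def)
    show "range g \<subseteq> H"
      using hol le1 by (auto simp: H_def)
  qed blast
  have "(\<lambda>n. g (r n) a) \<longlonglongrightarrow> 0"
    using LIMSEQ_subseq_LIMSEQ[OF lim G(2)] by (simp add: o_def)
  then have "G a = 0"
    by (rule LIMSEQ_unique[OF G(3)[OF \<open>a \<in> S\<close>]])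
  moreover have "G constant_on S"
  proof (rule ccontr)
    assume nonconst: "\<not> G constant_on S"
    have "G a \<noteq> 0"
    proof (rule Hurwitz_no_zeros[OF S, of "g \<circ> r" G a])
      show "(g \<circ> r) n holomorphic_on S" for n
        using hol by simp
      show "(g \<circ> r) n z \<noteq> 0" if "z \<in> S" for n z
        using nonzero[OF that] by simp
    qed (use G(1,4) nonconst \<open>a \<in> S\<close> in auto)
    with \<open>G a = 0\<close> show False
      by simp
  qed
  ultimately have "G z = 0" if "z \<in> S" for z
    using \<open>a \<in> S\<close> that unfolding constant_on_def by force
  with G(2,3) show ?thesis
    by auto
qed

lemma norm_at_top_spreads_holomorphic:
  fixes \<phi> :: "nat \<Rightarrow> complex \<Rightarrow> complex"
  assumes S: "open S" "connected S" and "a \<in> S" "b \<in> S"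
    and hol: "\<And>n. \<phi> n holomorphic_on S" and ge1: "\<And>n z. z \<in> S \<Longrightarrow> 1 \<le> norm (\<phi> n z)"
    and lim: "filterlim (\<lambda>n. norm (\<phi> n a)) at_top sequentially"
  shows "filterlim (\<lambda>n. norm (\<phi> n b)) at_top sequentially"
proof (rule ccontr)
  assume not_at_top: "\<not> filterlim (\<lambda>n. norm (\<phi> n b)) at_top sequentially"
  obtain B and r :: "nat \<Rightarrow> nat" where r: "strict_mono r" "\<And>n. norm (\<phi> (r n) b) \<le> B"
  proof (cases rule: bounded_subseq_or_tendsto_at_top[of "\<lambda>n. norm (\<phi> n b)"])
    case (bounded B r)
    then show thesis
      by (rule that)
  qed (use not_at_top in simp)
  define g where "g n z = inverse (\<phi> (r n) z)" for n z
  have nonzero: "\<phi> n z \<noteq> 0" if "z \<in> S" for n z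
    using ge1[OF that, of n] by auto
  have "filterlim (\<lambda>n. norm (\<phi> (r n) a)) at_top sequentially"
    using filterlim_compose[OF lim filterlim_subseq[OF r(1)]] by simp
  then have "(\<lambda>n. norm (g n a)) \<longlonglongrightarrow> 0"
    unfolding g_def norm_inverse by (rule tendsto_inverse_0_at_top)
  then have "(\<lambda>n. g n a) \<longlonglongrightarrow> 0"
    by (rule tendsto_norm_zero_cancel)
  moreover have "g n holomorphic_on S" for n
    unfolding g_def[abs_def] using hol nonzero by (rule holomorphic_on_inverse)
  moreover have "g n z \<noteq> 0" "norm (g n z) \<le> 1" if "z \<in> S" for n z
    using nonzero[OF that] ge1[OF that] by (simp_all add: g_def norm_inverse inverse_le_1_iff)
  ultimately have "\<exists>r'. strict_mono r' \<and> (\<forall>z\<in>S. (\<lambda>n. g (r' n) z) \<longlonglongrightarrow> 0)"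
    by (intro Montel_Hurwitz_tendsto_zero[OF S \<open>a \<in> S\<close>])
  then obtain r' :: "nat \<Rightarrow> nat" where "(\<lambda>n. g (r' n) b) \<longlonglongrightarrow> 0"
    using \<open>b \<in> S\<close> by blast
  then have lim_b: "(\<lambda>n. norm (g (r' n) b)) \<longlonglongrightarrow> 0"
    by (simp add: tendsto_norm_zero_iff)
  have "inverse B \<le> norm (g (r' n) b)" for n
    using r(2)[of "r' n"] ge1[OF \<open>b \<in> S\<close>, of "r (r' n)"]
    by (auto simp: g_def norm_inverse intro!: le_imp_inverse_le)
  then have "inverse B \<le> 0"
    by (intro tendsto_lowerbound[OF lim_b] always_eventually) simp_all
  moreover have "B \<ge> 1"
    using r(2)[of 0] ge1[OF \<open>b \<in> S\<close>, of "r 0"] by linarith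
  ultimately show False
    by simp
qed

lemma locally_deriv_growth_bounded_near:
  assumes loc: "locally_deriv_growth_bounded \<alpha> T D" and "\<alpha> \<ge> 0" "p \<in> D"
  shows "\<exists>\<rho>>0. ball p \<rho> \<subseteq> D \<and>
           (\<forall>f\<in>T. \<forall>z\<in>ball p \<rho>. \<forall>w\<in>ball p \<rho>. norm (f z) \<le> A \<longrightarrow> norm (f w) < A + 1)"
proof -
  obtain R M where "R > 0" "M > 0" "ball p R \<subseteq> D"
    and bound: "\<And>f. f \<in> T \<Longrightarrow> deriv_growth_bound \<alpha> M f (ball p R)"
    using loc \<open>p \<in> D\<close> unfolding locally_deriv_growth_bounded_def by blast
  define c where "c = M * (1 + (A + 1) powr \<alpha>)"
  have "c > 0"
    using \<open>M > 0\<close> by (simp add: c_def add_pos_nonneg)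
  define \<rho> where "\<rho> = min R (1 / (2 * c))"
  have "\<rho> > 0" "\<rho> \<le> R" "2 * \<rho> * c \<le> 1"
    using \<open>R > 0\<close> \<open>c > 0\<close> by (auto simp: \<rho>_def min_def field_simps)
  show ?thesis
  proof (intro exI[of _ \<rho>] conjI ballI impI)
    show "\<rho> > 0"
      by (rule \<open>\<rho> > 0\<close>)
    show "ball p \<rho> \<subseteq> D"
      using \<open>\<rho> \<le> R\<close> \<open>ball p R \<subseteq> D\<close> by auto
    fix f z w
    assume "f \<in> T" "z \<in> ball p \<rho>" "w \<in> ball p \<rho>" "norm (f z) \<le> A"
    have "norm (w - z) < 2 * \<rho>"
      using \<open>z \<in> ball p \<rho>\<close> \<open>w \<in> ball p \<rho>\<close> dist_triangle_less_add[of w p \<rho> z \<rho>]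
      by (simp add: dist_norm norm_minus_commute)
    then have "norm (w - z) * c < 1"
      using \<open>c > 0\<close> \<open>2 * \<rho> * c \<le> 1\<close> by (smt (verit) mult_strict_right_mono)
    then show "norm (f w) < A + 1"
      using \<open>z \<in> ball p \<rho>\<close> \<open>w \<in> ball p \<rho>\<close> \<open>\<rho> \<le> R\<close> \<open>M > 0\<close> \<open>\<alpha> \<ge> 0\<close> \<open>norm (f z) \<le> A\<close>
      by (intro deriv_growth_bound_norm_less[OF convex_ball bound[OF \<open>f \<in> T\<close>]])
         (auto simp: c_def)
  qed
qed

lemma locally_deriv_growth_bounded_holomorphic_on_line:
  assumes "locally_deriv_growth_bounded \<alpha> T D" "f \<in> T" "open S"
    and line: "\<And>l. l \<in> S \<Longrightarrow> p + l *s u \<in> D"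
  shows "(\<lambda>l. f (p + l *s u)) holomorphic_on S"
proof -
  have "\<exists>d. ((\<lambda>l. f (p + l *s u)) has_field_derivative d) (at l)" if l: "l \<in> S" for l
  proof -
    obtain L where "clinear_map L" "(f has_derivative L) (at (p + l *s u))"
      using locally_deriv_growth_bounded_has_derivative[OF assms(1,2) line[OF l]] by blast
    then show ?thesis
      using has_field_derivative_along_line by blast
  qed
  with \<open>open S\<close> show ?thesis
    by (simp add: holomorphic_on_open)
qed

lemma locally_deriv_growth_bounded_uniform_bound_near:
  assumes loc: "locally_deriv_growth_bounded \<alpha> T D" and "\<alpha> \<ge> 0" "z \<in> D"
    and bounded: "\<forall>f\<in>T. norm (f z) \<le> A"
  shows "\<exists>\<rho>>0. ball z \<rho> \<subseteq> D \<and> (\<forall>f\<in>T. \<forall>w\<in>ball z \<rho>. norm (f w) \<le> A + 1)"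
proof -
  obtain \<rho> where "\<rho> > 0" "ball z \<rho> \<subseteq> D" and near:
    "\<forall>f\<in>T. \<forall>v\<in>ball z \<rho>. \<forall>w\<in>ball z \<rho>. norm (f v) \<le> A \<longrightarrow> norm (f w) < A + 1"
    using locally_deriv_growth_bounded_near[OF loc \<open>\<alpha> \<ge> 0\<close> \<open>z \<in> D\<close>, of A] by blast
  have "norm (f w) \<le> A + 1" if "f \<in> T" "w \<in> ball z \<rho>" for f w
    using near[rule_format, of f z w] bounded that \<open>\<rho> > 0\<close> by simp
  with \<open>\<rho> > 0\<close> \<open>ball z \<rho> \<subseteq> D\<close> show ?thesis
    by blast
qed

lemma locally_deriv_growth_bounded_at_top_near:
  fixes t :: "nat \<Rightarrow> complex ^ 'n \<Rightarrow> complex"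
  assumes loc: "locally_deriv_growth_bounded \<alpha> (range t) D" and "\<alpha> \<ge> 0" "p \<in> D"
    and lim: "filterlim (\<lambda>k. norm (t k p)) at_top sequentially"
  shows "\<exists>\<rho>>0. ball p \<rho> \<subseteq> D \<and> (\<forall>B. \<forall>\<^sub>F k in sequentially. \<forall>w\<in>ball p \<rho>. B \<le> norm (t k w))"
proof -
  obtain \<rho> where "\<rho> > 0" "ball p \<rho> \<subseteq> D"
    and near: "\<forall>f\<in>range t. \<forall>z\<in>ball p \<rho>. \<forall>w\<in>ball p \<rho>. norm (f z) \<le> 1 \<longrightarrow> norm (f w) < 1 + 1"
    using locally_deriv_growth_bounded_near[OF loc \<open>\<alpha> \<ge> 0\<close> \<open>p \<in> D\<close>, of 1] by blast
  obtain N where N: "\<And>k. k \<ge> N \<Longrightarrow> 2 \<le> norm (t k p)"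
    using lim unfolding filterlim_at_top eventually_sequentially by blast
  have big: "1 \<le> norm (t k w)" if "k \<ge> N" "w \<in> ball p \<rho>" for k w
    using near[rule_format, of "t k" w p] N[OF \<open>k \<ge> N\<close>] \<open>w \<in> ball p \<rho>\<close> \<open>\<rho> > 0\<close>
    by force
  have "\<forall>\<^sub>F k in sequentially. \<forall>w\<in>ball p (\<rho> / 2). B \<le> norm (t k w)" for B
  proof (rule ccontr)
    assume "\<not> (\<forall>\<^sub>F k in sequentially. \<forall>w\<in>ball p (\<rho> / 2). B \<le> norm (t k w))"
    then have freq: "\<exists>\<^sub>F k in sequentially. k \<ge> N \<and> (\<exists>w\<in>ball p (\<rho> / 2). norm (t k w) < B)"
      by (auto simp: not_eventually not_le intro: frequently_eventually_conj eventually_ge_at_top)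
    obtain r :: "nat \<Rightarrow> nat"
      where r: "strict_mono r" "\<And>n. r n \<ge> N \<and> (\<exists>w\<in>ball p (\<rho> / 2). norm (t (r n) w) < B)"
      using frequently_subseq[OF freq] by blast
    then obtain w where w: "\<And>n. w n \<in> ball p (\<rho> / 2)" "\<And>n. norm (t (r n) (w n)) < B"
      by metis
    have on_ball: "p + l *s (w n - p) \<in> ball p \<rho>" if "l \<in> ball 0 2" for n l
      using add_smult_diff_mem_ball[of l 2 "w n" p "\<rho> / 2"] that w(1)[of n] by simp
    have "filterlim (\<lambda>n. norm (t (r n) (p + 1 *s (w n - p)))) at_top sequentially"
    proof (rule norm_at_top_spreads_holomorphic[of "ball 0 2" 0])
      show "(\<lambda>l. t (r n) (p + l *s (w n - p))) holomorphic_on ball 0 2" for n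
        using on_ball \<open>ball p \<rho> \<subseteq> D\<close>
        by (intro locally_deriv_growth_bounded_holomorphic_on_line[OF loc]) auto
      show "1 \<le> norm (t (r n) (p + l *s (w n - p)))" if "l \<in> ball 0 2" for n l
        using big r(2)[of n] on_ball[OF that] by blast
      show "filterlim (\<lambda>n. norm (t (r n) (p + 0 *s (w n - p)))) at_top sequentially"
        using filterlim_compose[OF lim filterlim_subseq[OF r(1)]] by simp
    qed auto
    then obtain n where "B \<le> norm (t (r n) (w n))"
      unfolding filterlim_at_top eventually_sequentially by auto
    with w(2)[of n] show False
      by simp
  qed
  with \<open>\<rho> > 0\<close> \<open>ball p \<rho> \<subseteq> D\<close> show ?thesis
    by (intro exI[of _ "\<rho> / 2"]) auto
qed

lemma locally_deriv_growth_bounded_not_at_top_near: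
  fixes t :: "nat \<Rightarrow> complex ^ 'n \<Rightarrow> complex"
  assumes loc: "locally_deriv_growth_bounded \<alpha> (range t) D" and "\<alpha> \<ge> 0" "z \<in> D"
    and not_at_top: "\<not> filterlim (\<lambda>k. norm (t k z)) at_top sequentially"
  shows "\<exists>\<rho>>0. ball z \<rho> \<subseteq> D \<and> (\<forall>w\<in>ball z \<rho>. \<not> filterlim (\<lambda>k. norm (t k w)) at_top sequentially)"
proof -
  obtain A and r :: "nat \<Rightarrow> nat" where r: "strict_mono r" "\<And>n. norm (t (r n) z) \<le> A"
  proof (cases rule: bounded_subseq_or_tendsto_at_top[of "\<lambda>k. norm (t k z)"])
    case (bounded A r)
    then show thesis
      by (rule that)
  qed (use not_at_top in simp)
  have "locally_deriv_growth_bounded \<alpha> (range (\<lambda>n. t (r n))) D"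
    using loc by (rule locally_deriv_growth_bounded_subset) auto
  moreover have "\<forall>f\<in>range (\<lambda>n. t (r n)). norm (f z) \<le> A"
    using r(2) by auto
  ultimately obtain \<rho> where "\<rho> > 0" "ball z \<rho> \<subseteq> D"
    and bounded: "\<forall>f\<in>range (\<lambda>n. t (r n)). \<forall>w\<in>ball z \<rho>. norm (f w) \<le> A + 1"
    using locally_deriv_growth_bounded_uniform_bound_near[OF _ \<open>\<alpha> \<ge> 0\<close> \<open>z \<in> D\<close>] by blast
  have "\<not> filterlim (\<lambda>k. norm (t k w)) at_top sequentially" if "w \<in> ball z \<rho>" for w
  proof
    assume "filterlim (\<lambda>k. norm (t k w)) at_top sequentially"
    then have "filterlim (\<lambda>n. norm (t (r n) w)) at_top sequentially"
      using filterlim_compose[OF _ filterlim_subseq[OF r(1)]] by blast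
    then obtain n where "A + 2 \<le> norm (t (r n) w)"
      unfolding filterlim_at_top eventually_sequentially by blast
    moreover have "norm (t (r n) w) \<le> A + 1"
      using bounded that by blast
    ultimately show False
      by simp
  qed
  with \<open>\<rho> > 0\<close> \<open>ball z \<rho> \<subseteq> D\<close> show ?thesis
    by blast
qed

lemma locally_deriv_growth_bounded_at_top_everywhere:
  fixes t :: "nat \<Rightarrow> complex ^ 'n \<Rightarrow> complex"
  assumes "connected D" and loc: "locally_deriv_growth_bounded \<alpha> (range t) D" and "\<alpha> \<ge> 0"
    and "p \<in> D" and lim: "filterlim (\<lambda>k. norm (t k p)) at_top sequentially"
  shows "\<forall>z\<in>D. \<exists>U. open U \<and> z \<in> U \<and> U \<subseteq> D \<and> (\<forall>B. \<forall>\<^sub>F k in sequentially. \<forall>w\<in>U. B \<le> norm (t k w))"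
proof -
  define E where "E = {z\<in>D. filterlim (\<lambda>k. norm (t k z)) at_top sequentially}"
  have near: "\<exists>\<rho>>0. ball z \<rho> \<subseteq> D \<and> (\<forall>B. \<forall>\<^sub>F k in sequentially. \<forall>w\<in>ball z \<rho>. B \<le> norm (t k w))"
    if "z \<in> E" for z
    using locally_deriv_growth_bounded_at_top_near[OF loc \<open>\<alpha> \<ge> 0\<close>] that by (simp add: E_def)
  have "open E"
  proof (rule openI)
    fix z assume "z \<in> E"
    then obtain \<rho> where "\<rho> > 0" "ball z \<rho> \<subseteq> D"
      and ev: "\<And>B. \<forall>\<^sub>F k in sequentially. \<forall>w\<in>ball z \<rho>. B \<le> norm (t k w)"
      using near by blast
    have "w \<in> E" if "w \<in> ball z \<rho>" for w
    proof -
      have "\<forall>\<^sub>F k in sequentially. B \<le> norm (t k w)" for B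
        using that by (intro eventually_mono[OF ev[of B]]) blast
      with \<open>ball z \<rho> \<subseteq> D\<close> that show ?thesis
        by (auto simp: E_def filterlim_at_top)
    qed
    with \<open>\<rho> > 0\<close> show "\<exists>e>0. ball z e \<subseteq> E"
      by blast
  qed
  moreover have "open (D - E)"
  proof (rule openI)
    fix z assume "z \<in> D - E"
    then obtain \<rho> where "\<rho> > 0" "ball z \<rho> \<subseteq> D"
      "\<forall>w\<in>ball z \<rho>. \<not> filterlim (\<lambda>k. norm (t k w)) at_top sequentially"
      using locally_deriv_growth_bounded_not_at_top_near[OF loc \<open>\<alpha> \<ge> 0\<close>, of z] by (auto simp: E_def)
    then show "\<exists>e>0. ball z e \<subseteq> D - E"
      by (auto simp: E_def)
  qed
  moreover have "p \<in> E"
    using \<open>p \<in> D\<close> lim by (simp add: E_def)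
  ultimately have "E = D"
    using connectedD[OF \<open>connected D\<close>, of E "D - E"] by (auto simp: E_def)
  show ?thesis
  proof
    fix z assume "z \<in> D"
    then obtain \<rho> where "\<rho> > 0" "ball z \<rho> \<subseteq> D"
      "\<forall>B. \<forall>\<^sub>F k in sequentially. \<forall>w\<in>ball z \<rho>. B \<le> norm (t k w)"
      using near \<open>E = D\<close> by blast
    then show "\<exists>U. open U \<and> z \<in> U \<and> U \<subseteq> D \<and> (\<forall>B. \<forall>\<^sub>F k in sequentially. \<forall>w\<in>U. B \<le> norm (t k w))"
      by (intro exI[of _ "ball z \<rho>"]) auto
  qed
qed

lemma locally_deriv_growth_bounded_bounded_everywhere:
  fixes t :: "nat \<Rightarrow> complex ^ 'n \<Rightarrow> complex"
  assumes "connected D" and loc: "locally_deriv_growth_bounded \<alpha> (range t) D" and "\<alpha> \<ge> 0"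
    and "p \<in> D" and bounded: "\<And>k. norm (t k p) \<le> A" and "z \<in> D"
  shows "\<exists>B. \<forall>k. norm (t k z) \<le> B"
proof (rule ccontr)
  assume "\<not> ?thesis"
  then obtain r :: "nat \<Rightarrow> nat"
    where "strict_mono r" and lim: "filterlim (\<lambda>n. norm (t (r n) z)) at_top sequentially"
    by (rule unbounded_subseq_tendsto_at_top)
  have "locally_deriv_growth_bounded \<alpha> (range (\<lambda>n. t (r n))) D"
    using loc by (rule locally_deriv_growth_bounded_subset) auto
  from locally_deriv_growth_bounded_at_top_everywhere[OF \<open>connected D\<close> this \<open>\<alpha> \<ge> 0\<close> \<open>z \<in> D\<close> lim]
  obtain U where "p \<in> U" "\<forall>\<^sub>F n in sequentially. \<forall>w\<in>U. A + 1 \<le> norm (t (r n) w)"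
    using \<open>p \<in> D\<close> by blast
  then obtain n where "A + 1 \<le> norm (t (r n) p)"
    unfolding eventually_sequentially by blast
  with bounded[of "r n"] show False
    by simp
qed

lemma locally_deriv_growth_bounded_bounded_on_compact:
  assumes loc: "locally_deriv_growth_bounded \<alpha> T D" and "\<alpha> \<ge> 0"
    and bounded: "\<And>z. z \<in> D \<Longrightarrow> \<exists>B. \<forall>f\<in>T. norm (f z) \<le> B"
    and "compact K" "K \<subseteq> D"
  shows "\<exists>B. \<forall>f\<in>T. \<forall>z\<in>K. norm (f z) \<le> B"
proof -
  have "\<forall>z\<in>K. \<exists>\<rho>>0. \<exists>B. \<forall>f\<in>T. \<forall>w\<in>ball z \<rho>. norm (f w) \<le> B"
  proof
    fix z assume "z \<in> K"
    with \<open>K \<subseteq> D\<close> obtain A where "z \<in> D" "\<forall>f\<in>T. norm (f z) \<le> A"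
      using bounded by blast
    from locally_deriv_growth_bounded_uniform_bound_near[OF loc \<open>\<alpha> \<ge> 0\<close> this]
    show "\<exists>\<rho>>0. \<exists>B. \<forall>f\<in>T. \<forall>w\<in>ball z \<rho>. norm (f w) \<le> B"
      by blast
  qed
  from bchoice[OF this] obtain \<rho>
    where \<rho>: "\<forall>z\<in>K. \<rho> z > 0 \<and> (\<exists>B. \<forall>f\<in>T. \<forall>w\<in>ball z (\<rho> z). norm (f w) \<le> B)"
    by blast
  then have "\<forall>z\<in>K. \<exists>B. \<forall>f\<in>T. \<forall>w\<in>ball z (\<rho> z). norm (f w) \<le> B"
    by blast
  from bchoice[OF this] obtain B where B: "\<forall>z\<in>K. \<forall>f\<in>T. \<forall>w\<in>ball z (\<rho> z). norm (f w) \<le> B z"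
    by blast
  obtain C where "C \<subseteq> K" "finite C" and cover: "K \<subseteq> (\<Union>c\<in>C. ball c (\<rho> c))"
  proof (rule compactE_image[OF \<open>compact K\<close>, of K "\<lambda>c. ball c (\<rho> c)"])
    show "K \<subseteq> (\<Union>c\<in>K. ball c (\<rho> c))"
      using \<rho> by force
  qed auto
  have "norm (f z) \<le> (\<Sum>c\<in>C. \<bar>B c\<bar>)" if "f \<in> T" "z \<in> K" for f z
  proof -
    obtain c where "c \<in> C" "z \<in> ball c (\<rho> c)"
      using cover \<open>z \<in> K\<close> by blast
    then have "norm (f z) \<le> \<bar>B c\<bar>"
      using B \<open>C \<subseteq> K\<close> \<open>f \<in> T\<close> by force
    also have "\<dots> \<le> (\<Sum>c\<in>C. \<bar>B c\<bar>)"
      using \<open>c \<in> C\<close> \<open>finite C\<close> by (intro member_le_sum) auto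
    finally show ?thesis .
  qed
  then show ?thesis
    by blast
qed

lemma locally_deriv_growth_bounded_lipschitz_near:
  assumes loc: "locally_deriv_growth_bounded \<alpha> T D" and "\<alpha> \<ge> 0" "x \<in> D"
    and bounded: "\<forall>f\<in>T. norm (f x) \<le> A"
  shows "\<exists>r>0. \<exists>c>0. \<forall>f\<in>T. \<forall>y\<in>ball x r. norm (f x - f y) \<le> c * norm (x - y)"
proof -
  obtain R M where "R > 0" "M > 0"
    and deriv: "\<And>f. f \<in> T \<Longrightarrow> deriv_growth_bound \<alpha> M f (ball x R)"
    using loc \<open>x \<in> D\<close> unfolding locally_deriv_growth_bounded_def by blast
  obtain \<rho> where "\<rho> > 0" and near: "\<forall>f\<in>T. \<forall>w\<in>ball x \<rho>. norm (f w) \<le> A + 1"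
    using locally_deriv_growth_bounded_uniform_bound_near[OF assms] by blast
  define r where "r = min \<rho> R"
  define c where "c = M * (1 + (A + 1) powr \<alpha>)"
  have "r > 0" "c > 0"
    using \<open>\<rho> > 0\<close> \<open>R > 0\<close> \<open>M > 0\<close> by (auto simp: r_def c_def add_pos_nonneg)
  have onorm_le: "\<exists>L. (f has_derivative L) (at w) \<and> onorm L \<le> c" if "f \<in> T" "w \<in> ball x r" for f w
  proof -
    have "w \<in> ball x R"
      using \<open>w \<in> ball x r\<close> by (simp add: r_def)
    then obtain L where L: "(f has_derivative L) (at w)"
      "\<And>v. norm (L v) \<le> M * (1 + norm (f w) powr \<alpha>) * norm v"
      using deriv[OF \<open>f \<in> T\<close>] unfolding deriv_growth_bound_def by blast
    have "norm (f w) \<le> A + 1"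
      using near \<open>f \<in> T\<close> \<open>w \<in> ball x r\<close> by (simp add: r_def)
    then have "M * (1 + norm (f w) powr \<alpha>) \<le> c"
      unfolding c_def using \<open>M > 0\<close> \<open>\<alpha> \<ge> 0\<close> by (simp add: powr_mono2)
    then have "norm (L v) \<le> c * norm v" for v
      using L(2)[of v] by (meson mult_right_mono norm_ge_zero order_trans)
    then show ?thesis
      using L(1) onorm_le by blast
  qed
  have "norm (f x - f y) \<le> c * norm (x - y)" if "f \<in> T" "y \<in> ball x r" for f y
  proof -
    obtain L where "\<And>w. w \<in> ball x r \<Longrightarrow> (f has_derivative L w) (at w) \<and> onorm (L w) \<le> c"
      using onorm_le[OF \<open>f \<in> T\<close>] by metis
    then show ?thesis
      using \<open>r > 0\<close> \<open>y \<in> ball x r\<close>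
      by (intro differentiable_bound[OF convex_ball, where f' = L]) (auto intro: has_derivative_at_withinI)
  qed
  with \<open>r > 0\<close> \<open>c > 0\<close> show ?thesis
    by blast
qed

lemma locally_deriv_growth_bounded_equicontinuous:
  assumes loc: "locally_deriv_growth_bounded \<alpha> T D" and "\<alpha> \<ge> 0" "x \<in> D"
    and bounded: "\<forall>f\<in>T. norm (f x) \<le> A" and "e > 0"
  shows "\<exists>d>0. \<forall>f\<in>T. \<forall>y. norm (x - y) < d \<longrightarrow> norm (f x - f y) < e"
proof -
  obtain r c where "r > 0" "c > 0"
    and lipschitz: "\<forall>f\<in>T. \<forall>y\<in>ball x r. norm (f x - f y) \<le> c * norm (x - y)"
    using locally_deriv_growth_bounded_lipschitz_near[OF loc \<open>\<alpha> \<ge> 0\<close> \<open>x \<in> D\<close> bounded] by blast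
  show ?thesis
  proof (intro exI[of _ "min r (e / c)"] conjI ballI allI impI)
    show "min r (e / c) > 0"
      using \<open>r > 0\<close> \<open>c > 0\<close> \<open>e > 0\<close> by simp
    fix f y
    assume "f \<in> T" and y: "norm (x - y) < min r (e / c)"
    then have "norm (f x - f y) \<le> c * norm (x - y)"
      using lipschitz by (simp add: dist_norm)
    also have "\<dots> < c * (e / c)"
      using y \<open>c > 0\<close> by (intro mult_strict_left_mono) auto
    finally show "norm (f x - f y) < e"
      using \<open>c > 0\<close> by simp
  qed
qed

lemma locally_deriv_growth_bounded_convergent_subseq:
  fixes t :: "nat \<Rightarrow> complex ^ 'n \<Rightarrow> complex"
  assumes "open D" "connected D" and loc: "locally_deriv_growth_bounded \<alpha> (range t) D" and "\<alpha> \<ge> 0"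
    and "p \<in> D" and "\<And>k. norm (t k p) \<le> A"
  shows "\<exists>r g. strict_mono r \<and>
           (\<forall>z\<in>D. \<exists>U. open U \<and> z \<in> U \<and> U \<subseteq> D \<and> uniform_limit U (\<lambda>k. t (r k)) g sequentially)"
proof -
  have pointwise: "\<exists>B. \<forall>f\<in>range t. norm (f z) \<le> B" if "z \<in> D" for z
    using locally_deriv_growth_bounded_bounded_everywhere[OF \<open>connected D\<close> loc \<open>\<alpha> \<ge> 0\<close> \<open>p \<in> D\<close>]
      assms(6) that by auto
  have bounded: "\<exists>B. \<forall>n. \<forall>x\<in>K. norm (t n x) \<le> B" if "compact K" "K \<subseteq> D" for K
    using locally_deriv_growth_bounded_bounded_on_compact[OF loc \<open>\<alpha> \<ge> 0\<close> pointwise that] by auto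
  have equicont: "\<exists>d>0. \<forall>n y. y \<in> D \<and> norm (x - y) < d \<longrightarrow> norm (t n x - t n y) < e"
    if "x \<in> D" "0 < e" for x e
  proof -
    obtain B where "\<forall>f\<in>range t. norm (f x) \<le> B"
      using pointwise[OF \<open>x \<in> D\<close>] by blast
    from locally_deriv_growth_bounded_equicontinuous[OF loc \<open>\<alpha> \<ge> 0\<close> \<open>x \<in> D\<close> this \<open>0 < e\<close>]
    show ?thesis
      by auto
  qed
  obtain g and r :: "nat \<Rightarrow> nat" where "strict_mono r"
    and lim: "\<And>K. \<lbrakk>compact K; K \<subseteq> D\<rbrakk> \<Longrightarrow> uniform_limit K (t \<circ> r) g sequentially"
    using Arzela_Ascoli_open[OF \<open>open D\<close> bounded equicont] by blast
  have "\<exists>U. open U \<and> z \<in> U \<and> U \<subseteq> D \<and> uniform_limit U (\<lambda>k. t (r k)) g sequentially"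
    if "z \<in> D" for z
  proof -
    obtain e where "e > 0" "cball z e \<subseteq> D"
      using \<open>open D\<close> \<open>z \<in> D\<close> open_contains_cball by blast
    then have "uniform_limit (cball z e) (t \<circ> r) g sequentially"
      using lim by simp
    then have "uniform_limit (ball z e) (t \<circ> r) g sequentially"
      by (rule uniform_limit_on_subset) (rule ball_subset_cball)
    with \<open>e > 0\<close> \<open>cball z e \<subseteq> D\<close> show ?thesis
      by (intro exI[of _ "ball z e"]) (auto simp: o_def)
  qed
  with \<open>strict_mono r\<close> show ?thesis
    by blast
qed

lemma normal_family_if_locally_deriv_growth_bounded:
  fixes \<F> :: "(complex ^ 'n \<Rightarrow> complex) set"
  assumes "open D" "connected D" "D \<noteq> {}"
    and loc: "locally_deriv_growth_bounded \<alpha> \<F> D" and "\<alpha> \<ge> 0"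
  shows "normal_family \<F> D"
  unfolding normal_family_def
proof (intro allI impI)
  fix s :: "nat \<Rightarrow> complex ^ 'n \<Rightarrow> complex"
  assume "range s \<subseteq> \<F>"
  with loc have loc_s: "locally_deriv_growth_bounded \<alpha> (range s) D"
    by (rule locally_deriv_growth_bounded_subset)
  obtain p where "p \<in> D"
    using \<open>D \<noteq> {}\<close> by blast
  show "\<exists>r. strict_mono r \<and>
          ((\<exists>g. \<forall>z\<in>D. \<exists>U. open U \<and> z \<in> U \<and> U \<subseteq> D \<and> uniform_limit U (\<lambda>k. s (r k)) g sequentially)
           \<or> (\<forall>z\<in>D. \<exists>U. open U \<and> z \<in> U \<and> U \<subseteq> D \<and> (\<forall>B. \<forall>\<^sub>F k in sequentially. \<forall>w\<in>U. cmod (s (r k) w) \<ge> B)))"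
  proof (cases rule: bounded_subseq_or_tendsto_at_top[of "\<lambda>k. norm (s k p)"])
    case (bounded A r)
    have "locally_deriv_growth_bounded \<alpha> (range (\<lambda>k. s (r k))) D"
      using loc_s by (rule locally_deriv_growth_bounded_subset) auto
    from locally_deriv_growth_bounded_convergent_subseq[OF \<open>open D\<close> \<open>connected D\<close> this \<open>\<alpha> \<ge> 0\<close> \<open>p \<in> D\<close> bounded(2)]
    obtain r' g where "strict_mono r'"
      "\<forall>z\<in>D. \<exists>U. open U \<and> z \<in> U \<and> U \<subseteq> D \<and> uniform_limit U (\<lambda>k. s (r (r' k))) g sequentially"
      by blast
    with \<open>strict_mono r\<close> show ?thesis
      by (intro exI[of _ "r \<circ> r'"]) (auto intro: strict_mono_o)
  next
    case at_top
    with locally_deriv_growth_bounded_at_top_everywhere[OF \<open>connected D\<close> loc_s \<open>\<alpha> \<ge> 0\<close> \<open>p \<in> D\<close>]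
    show ?thesis
      by (intro exI[of _ id]) (auto simp: strict_mono_id)
  qed
qed

theorem theorem11:
  fixes D :: "(complex ^ 'n) set" and \<F> :: "(complex ^ 'n \<Rightarrow> complex) set" and \<alpha> :: real
  assumes "open D" and "connected D" and "D \<noteq> {}"
    and "\<forall>f\<in>\<F>. holo_on f D"
    and "\<alpha> > 0"
    and "loc_unif_bounded ((\<lambda>f. F_alpha \<alpha> f) ` \<F>) D"
  shows "normal_family \<F> D"
proof (rule normal_family_if_locally_deriv_growth_bounded)
  show "locally_deriv_growth_bounded \<alpha> \<F> D"
    using assms(4,6) by (rule locally_deriv_growth_bounded_if_F_alpha_bounded)
  show "\<alpha> \<ge> 0"
    using \<open>\<alpha> > 0\<close> by simp
qed (use assms in auto)

end
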